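(* Let $K_{1,n}$ be the star with $n\geq 3$ leaves and let $p\geq 2$ be an integer. Then $C_{p,1}^T(K_{1,n})\leq n+2p-1$.
   Context: For an integer $p$, a $(p,1)$-total labelling of a graph $G$ is a function $c$ from $V(G)\cup E(G)$ to the nonnegative integers such that $c(u)\neq c(v)$ whenever $uv\in E(G)$, $c(e)\neq c(e')$ whenever $e,e'$ are distinct edges sharing an endpoint, and $|c(u)-c(e)|\geq p$ whenever vertex $u$ is incident to edge $e$. A list assignment $L$ assigns to every $x\in V(G)\cup E(G)$ a set $L(x)$ of nonnegative integers; $G$ is $L$-$(p,1)$-total labelable if it has a $(p,1)$-total labelling $c$ with $c(x)\in L(x)$ for all $x$. The $(p,1)$-total labelling choosability $C_{p,1}^T(G)$ is the minimum $k$ such that $G$ is $L$-$(p,1)$-total labelable for every list assignment $L$ with $|L(x)|=k$ for all $x\in V(G)\cup E(G)$. *)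

theory Defs
  imports Main
begin

text \<open>A simple graph is given by a vertex set V and a set E of edges, each edge a
  2-element subset of V. Elements of V \<union> E are represented by the datatype below.\<close>

datatype 'a elem = Vx 'a | Ed "'a set"

definition elems :: "'a set \<Rightarrow> 'a set set \<Rightarrow> 'a elem set" where
  "elems V E = Vx ` V \<union> Ed ` E"

definition total_labelling :: "nat \<Rightarrow> 'a set \<Rightarrow> 'a set set \<Rightarrow> ('a elem \<Rightarrow> nat) \<Rightarrow> bool" where
  "total_labelling p V E c \<longleftrightarrow>
     (\<forall>u v. {u, v} \<in> E \<longrightarrow> c (Vx u) \<noteq> c (Vx v)) \<and>
     (\<forall>e\<in>E. \<forall>e'\<in>E. e \<noteq> e' \<and> e \<inter> e' \<noteq> {} \<longrightarrow> c (Ed e) \<noteq> c (Ed e')) \<and>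
     (\<forall>e\<in>E. \<forall>u\<in>e. \<bar>int (c (Vx u)) - int (c (Ed e))\<bar> \<ge> int p)"

definition L_labelable :: "nat \<Rightarrow> 'a set \<Rightarrow> 'a set set \<Rightarrow> ('a elem \<Rightarrow> nat set) \<Rightarrow> bool" where
  "L_labelable p V E L \<longleftrightarrow>
     (\<exists>c. total_labelling p V E c \<and> (\<forall>x\<in>elems V E. c x \<in> L x))"

definition total_choosable :: "nat \<Rightarrow> 'a set \<Rightarrow> 'a set set \<Rightarrow> nat \<Rightarrow> bool" where
  "total_choosable p V E k \<longleftrightarrow>
     (\<forall>L. (\<forall>x\<in>elems V E. finite (L x) \<and> card (L x) = k) \<longrightarrow> L_labelable p V E L)"

definition total_choosability :: "nat \<Rightarrow> 'a set \<Rightarrow> 'a set set \<Rightarrow> nat" where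
  "total_choosability p V E = (LEAST k. total_choosable p V E k)"

definition star_V :: "nat \<Rightarrow> nat set" where
  "star_V n = {0..n}"

definition star_E :: "nat \<Rightarrow> nat set set" where
  "star_E n = {{0, i} | i. 1 \<le> i \<and> i \<le> n}"

end

theory Submission
  imports Defs
begin

text \<open>Fix any label of the centre. Each edge list loses at most the 2p - 1 labels
  within distance p - 1 of it, so at least n labels survive and Hall's condition holds
  trivially: the edges can be labelled greedily with pairwise distinct labels. Each leaf
  must then avoid the centre's label and the 2p - 1 labels near its edge's label, which
  leaves at least one of its n + 2p - 1 labels when n \<ge> 2.\<close>

lemma ex_notin_of_card_less:
  assumes "finite A" and "finite B" and "card A < card B"
  obtains x where "x \<in> B" and "x \<notin> A"
proof -
  have "B - A \<noteq> {}"
    using card_less_sym_Diff[OF assms] by (metis card.empty not_less0)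
  then show thesis using that by blast
qed

lemma inj_choice_of_card_le:
  assumes "finite I" and "\<forall>i\<in>I. finite (A i) \<and> card I \<le> card (A i)"
  shows "\<exists>f. (\<forall>i\<in>I. f i \<in> A i) \<and> inj_on f I"
  using assms
proof (induction I rule: finite_induct)
  case empty
  show ?case by simp
next
  case (insert j I)
  then obtain f where f: "\<forall>i\<in>I. f i \<in> A i" "inj_on f I"
    by (metis card_insert_le insert_iff le_trans)
  have "card (f ` I) < card (A j)"
    using insert card_image_le[of I f] by force
  then obtain x where x: "x \<in> A j" "x \<notin> f ` I"
    using insert by (metis ex_notin_of_card_less finite_imageI insertI1)
  have "inj_on (f(j := x)) (insert j I)"
    using f(2) x(2) insert(2) by (auto simp: inj_on_def)
  moreover have "\<forall>i\<in>insert j I. (f(j := x)) i \<in> A i"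
    using f(1) x(1) by auto
  ultimately show ?case by blast
qed

definition window :: "nat \<Rightarrow> nat \<Rightarrow> nat set" where
  "window p c = {c - (p - 1) .. c + (p - 1)}"

lemma finite_window [simp]: "finite (window p c)"
  by (simp add: window_def)

lemma card_window_le: "p \<ge> 1 \<Longrightarrow> card (window p c) \<le> 2 * p - 1"
  by (simp add: window_def)

lemma dist_ge_of_notin_window: "x \<notin> window p c \<Longrightarrow> int p \<le> \<bar>int x - int c\<bar>"
  by (auto simp: window_def)

lemma mem_star_E_iff: "e \<in> star_E n \<longleftrightarrow> (\<exists>i\<in>{1..n}. e = {0, i})"
  unfolding star_E_def by (simp add: Bex_def conj_commute)

lemma mem_elems_star_iff:
  "x \<in> elems (star_V n) (star_E n) \<longleftrightarrow> (\<exists>v\<le>n. x = Vx v) \<or> (\<exists>i\<in>{1..n}. x = Ed {0, i})"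
proof -
  have "x \<in> Vx ` star_V n \<longleftrightarrow> (\<exists>v\<le>n. x = Vx v)"
    by (auto simp: star_V_def)
  moreover have "x \<in> Ed ` star_E n \<longleftrightarrow> (\<exists>i\<in>{1..n}. x = Ed {0, i})"
    using mem_star_E_iff[of _ n] by blast
  ultimately show ?thesis
    unfolding elems_def by blast
qed

text \<open>The edge {0, i} is labelled through its leaf i = Max {0, i}.\<close>
definition star_labelling :: "nat \<Rightarrow> (nat \<Rightarrow> nat) \<Rightarrow> (nat \<Rightarrow> nat) \<Rightarrow> nat elem \<Rightarrow> nat" where
  "star_labelling c0 leaf edge x =
     (case x of Vx v \<Rightarrow> if v = 0 then c0 else leaf v | Ed e \<Rightarrow> edge (Max e))"

lemma star_labelling_simps [simp]:
  "star_labelling c0 leaf edge (Vx 0) = c0"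
  "v \<noteq> 0 \<Longrightarrow> star_labelling c0 leaf edge (Vx v) = leaf v"
  "star_labelling c0 leaf edge (Ed {0, i}) = edge i"
  by (simp_all add: star_labelling_def max_def)

lemma total_labelling_star_labelling:
  assumes "inj_on edge {1..n}"
    and "\<forall>i\<in>{1..n}. leaf i \<noteq> c0 \<and> int p \<le> \<bar>int (edge i) - int c0\<bar>
                               \<and> int p \<le> \<bar>int (leaf i) - int (edge i)\<bar>"
  shows "total_labelling p (star_V n) (star_E n) (star_labelling c0 leaf edge)"
  unfolding total_labelling_def
proof (intro conjI allI impI ballI)
  fix u v assume "{u, v} \<in> star_E n"
  then obtain i where i: "i \<in> {1..n}" "{u, v} = {0, i}"
    using mem_star_E_iff[of _ n] by blast
  then have "u = 0 \<and> v = i \<or> u = i \<and> v = 0"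
    by (simp add: doubleton_eq_iff)
  then show "star_labelling c0 leaf edge (Vx u) \<noteq> star_labelling c0 leaf edge (Vx v)"
    using i(1) assms(2) by auto
next
  fix e e' assume "e \<in> star_E n" "e' \<in> star_E n" "e \<noteq> e' \<and> e \<inter> e' \<noteq> {}"
  moreover obtain i where i: "i \<in> {1..n}" "e = {0, i}"
    using \<open>e \<in> star_E n\<close> mem_star_E_iff[of _ n] by blast
  moreover obtain j where j: "j \<in> {1..n}" "e' = {0, j}"
    using \<open>e' \<in> star_E n\<close> mem_star_E_iff[of _ n] by blast
  ultimately have "i \<noteq> j"
    by blast
  then have "edge i \<noteq> edge j"
    using inj_on_contraD[OF assms(1) _ i(1) j(1)] by blast
  then show "star_labelling c0 leaf edge (Ed e) \<noteq> star_labelling c0 leaf edge (Ed e')"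
    by (simp add: i(2) j(2))
next
  fix e u assume "e \<in> star_E n" "u \<in> e"
  moreover obtain i where "i \<in> {1..n}" "e = {0, i}"
    using \<open>e \<in> star_E n\<close> mem_star_E_iff[of _ n] by blast
  ultimately show "int p \<le> \<bar>int (star_labelling c0 leaf edge (Vx u))
                        - int (star_labelling c0 leaf edge (Ed e))\<bar>"
    using assms(2) by (auto simp: abs_minus_commute)
qed

lemma star_labelling_in_lists:
  assumes "c0 \<in> L (Vx 0)" and "\<forall>i\<in>{1..n}. leaf i \<in> L (Vx i) \<and> edge i \<in> L (Ed {0, i})"
    and "x \<in> elems (star_V n) (star_E n)"
  shows "star_labelling c0 leaf edge x \<in> L x"
proof -
  from assms(3) consider v where "v \<le> n" "x = Vx v" | i where "i \<in> {1..n}" "x = Ed {0, i}"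
    unfolding mem_elems_star_iff by blast
  then show ?thesis
  proof cases
    case (1 v)
    then show ?thesis using assms(1,2) by (cases "v = 0") auto
  next
    case (2 i)
    then show ?thesis using assms(2) by simp
  qed
qed

lemma inj_choice_outside_window:
  assumes "p \<ge> 1" and "\<forall>i\<in>{1..n}. finite (L i) \<and> n + 2 * p - 1 \<le> card (L i)"
  shows "\<exists>f. inj_on f {1..n} \<and> (\<forall>i\<in>{1..n}. f i \<in> L i \<and> f i \<notin> window p c)"
proof -
  have "\<forall>i\<in>{1..n}. finite (L i - window p c) \<and> card {1..n} \<le> card (L i - window p c)"
  proof
    fix i assume "i \<in> {1..n}"
    then have "finite (L i)" and card_L: "n + 2 * p - 1 \<le> card (L i)"
      using assms(2) by blast+
    have "card (L i) - card (window p c) \<le> card (L i - window p c)"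
      by (rule diff_card_le_card_Diff) simp
    then have "n \<le> card (L i - window p c)"
      using card_L card_window_le[OF assms(1), of c] assms(1) by linarith
    with \<open>finite (L i)\<close> show "finite (L i - window p c) \<and> card {1..n} \<le> card (L i - window p c)"
      by simp
  qed
  then obtain f where "\<forall>i\<in>{1..n}. f i \<in> L i - window p c" "inj_on f {1..n}"
    using inj_choice_of_card_le[of "{1..n}" "\<lambda>i. L i - window p c"] by blast
  then show ?thesis
    by blast
qed

lemma ex_avoiding_point_and_window:
  assumes "p \<ge> 1" and "finite S" and "2 * p < card S"
  obtains y where "y \<in> S" and "y \<noteq> c" and "y \<notin> window p d"
proof -
  have "card (insert c (window p d)) < card S"
    using card_insert_le_m1[of "2 * p" "window p d" c] card_window_le[OF assms(1), of d] assms
    by linarith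
  then show thesis
    using that ex_notin_of_card_less[OF _ assms(2)] by (metis finite_insert finite_window insert_iff)
qed

lemma star_total_choosable:
  assumes "n \<ge> 2" and "p \<ge> 1"
  shows "total_choosable p (star_V n) (star_E n) (n + 2 * p - 1)"
  unfolding total_choosable_def
proof (intro allI impI)
  fix L :: "nat elem \<Rightarrow> nat set"
  assume card_L: "\<forall>x\<in>elems (star_V n) (star_E n). finite (L x) \<and> card (L x) = n + 2 * p - 1"
  have LV: "finite (L (Vx v)) \<and> card (L (Vx v)) = n + 2 * p - 1" if "v \<le> n" for v
    using card_L mem_elems_star_iff[of "Vx v" n] that by blast
  have LE: "finite (L (Ed {0, i})) \<and> card (L (Ed {0, i})) = n + 2 * p - 1" if "i \<in> {1..n}" for i
    using card_L mem_elems_star_iff[of "Ed {0, i}" n] that by blast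
  obtain c0 where c0: "c0 \<in> L (Vx 0)"
    using LV[of 0] assms by fastforce
  obtain edge where edge: "inj_on edge {1..n}" "\<forall>i\<in>{1..n}. edge i \<in> L (Ed {0, i}) \<and> edge i \<notin> window p c0"
    using inj_choice_outside_window[OF assms(2), of n "\<lambda>i. L (Ed {0, i})" c0] LE by auto
  have "\<exists>y. y \<in> L (Vx i) \<and> y \<noteq> c0 \<and> y \<notin> window p (edge i)" if "i \<in> {1..n}" for i
  proof -
    have "finite (L (Vx i))" "2 * p < card (L (Vx i))"
      using LV[of i] that assms by auto
    then show ?thesis
      by (metis ex_avoiding_point_and_window assms(2))
  qed
  then obtain leaf where leaf: "\<forall>i\<in>{1..n}. leaf i \<in> L (Vx i) \<and> leaf i \<noteq> c0 \<and> leaf i \<notin> window p (edge i)"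
    by metis
  have "total_labelling p (star_V n) (star_E n) (star_labelling c0 leaf edge)"
    using edge leaf by (intro total_labelling_star_labelling) (auto simp: dist_ge_of_notin_window)
  moreover have "\<forall>x\<in>elems (star_V n) (star_E n). star_labelling c0 leaf edge x \<in> L x"
    using c0 edge leaf star_labelling_in_lists[of c0 L n leaf edge] by blast
  ultimately show "L_labelable p (star_V n) (star_E n) L"
    unfolding L_labelable_def by blast
qed

theorem theorem3p1:
  fixes n p :: nat
  assumes "n \<ge> 3" and "p \<ge> 2"
  shows "total_choosability p (star_V n) (star_E n) \<le> n + 2 * p - 1"
  unfolding total_choosability_def
  by (rule Least_le) (rule star_total_choosable; use assms in simp)

end
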